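(* Let $m\ge2$ and $f_1,\dots,f_m:X\to\mathbb R_{+\infty}$ with $\bigcap_{i=1}^m\operatorname{dom} f_i\ne\emptyset$, and suppose the zero function $0$ belongs to $\mathcal L$. The following are equivalent: (i) $0\in\bigcap_{\varepsilon>0}\bigcup_{x\in X}\sum_{i=1}^m\partial_\varepsilon f_i(x)$; (ii) $\left(\sum_{i=1}^m f_i\right)^*(0)=(f_1^*\square\cdots\square f_m^* )(0)<+\infty$. (Note that (ii) means the primal problem $\inf_{x\in X}\sum_i f_i(x)$ and the dual problem $\sup\{-\sum_i f_i^*(l_i): l_i\in\mathcal L,\ \sum_i l_i=0\}$ have equal, finite optimal values.)
   Context: $X$ is a nonempty set; $\mathbb R_{+\infty}=\mathbb R\cup\{+\infty\}$. A space of abstract linear functions is a family $\mathcal L$ of functions $l:X\to\mathbb R$ such that (a) $l_1,l_2\in\mathcal L$ implies $l_1+l_2\in\mathcal L$, and (b) for every $l\in\mathcal L$ and $m\in\mathbb N$ there exist $l_1,\dots,l_m\in\mathcal L$ with $l=l_1+\dots+l_m$. For $f:X\to\mathbb R_{+\infty}$: $\operatorname{dom} f=\{x:f(x)<+\infty\}$; $f^*(l)=\sup_{x\in X}(l(x)-f(x))$. Infimal convolution: $(g_1\square\cdots\square g_m)(l)=\inf\{\sum_i g_i(l_i):l_i\in\mathcal L,\ \sum_i l_i=l\}$. For $\varepsilon\ge0$ and $x\in\operatorname{dom} f$, $\partial_\varepsilon f(x)=\{l\in\mathcal L: f(y)-f(x)-(l(y)-l(x))+\varepsilon\ge0\ \forall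 y\in X\}$, and $\partial_\varepsilon f(x)=\emptyset$ if $x\notin\operatorname{dom} f$. Sums of subsets of $\mathcal L$ are Minkowski sums. *)

theory Defs
  imports "HOL-Analysis.Analysis" "HOL-Library.Extended_Real"
begin

text \<open>Functions X -> R_{+infty} are modelled as 'a => ereal never taking the value -infinity.
  Abstract linear functions are real-valued functions on 'a; L is a set of them.\<close>

definition abstract_linear_space :: "('a \<Rightarrow> real) set \<Rightarrow> bool" where
  "abstract_linear_space L \<longleftrightarrow>
     (\<forall>l1\<in>L. \<forall>l2\<in>L. (\<lambda>x. l1 x + l2 x) \<in> L) \<and>
     (\<forall>l\<in>L. \<forall>k::nat. k \<ge> 1 \<longrightarrow>
        (\<exists>ls. (\<forall>i\<in>{1..k}. ls i \<in> L) \<and> l = (\<lambda>x. \<Sum>i=1..k. ls i x)))"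

definition edom :: "('a \<Rightarrow> ereal) \<Rightarrow> 'a set" where
  "edom f = {x. f x < \<infinity>}"

definition fconj :: "('a \<Rightarrow> ereal) \<Rightarrow> ('a \<Rightarrow> real) \<Rightarrow> ereal" where
  "fconj f l = (SUP x. ereal (l x) - f x)"

definition infconv ::
  "('a \<Rightarrow> real) set \<Rightarrow> nat \<Rightarrow> (nat \<Rightarrow> ('a \<Rightarrow> real) \<Rightarrow> ereal) \<Rightarrow> ('a \<Rightarrow> real) \<Rightarrow> ereal" where
  "infconv L m g l =
     (INF ls \<in> {ls. (\<forall>i\<in>{1..m}. ls i \<in> L) \<and> (\<lambda>x. \<Sum>i=1..m. ls i x) = l}. (\<Sum>i=1..m. g i (ls i)))"

definition eps_subdiff ::
  "('a \<Rightarrow> real) set \<Rightarrow> ('a \<Rightarrow> ereal) \<Rightarrow> real \<Rightarrow> 'a \<Rightarrow> ('a \<Rightarrow> real) set" where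
  "eps_subdiff L f \<epsilon> x =
     (if x \<in> edom f
      then {l \<in> L. \<forall>y. f y - f x - ereal (l y - l x) + ereal \<epsilon> \<ge> 0}
      else {})"

definition minkowski_sum :: "nat \<Rightarrow> (nat \<Rightarrow> ('a \<Rightarrow> real) set) \<Rightarrow> ('a \<Rightarrow> real) set" where
  "minkowski_sum m A = {(\<lambda>x. \<Sum>i=1..m. ls i x) | ls. \<forall>i\<in>{1..m}. ls i \<in> A i}"

end

theory Submission
  imports Defs
begin

(* By Fenchel-Young, whenever l_1 + ... + l_m = l each term f_i^*(l_i) + f_i(x) - l_i(x) is
   nonnegative, and l_i is an eps-subgradient of f_i at x exactly when its term is at most eps.
   The terms add up to the gap between the dual value sum_i f_i^*(l_i) and the primal value
   l(x) - sum_i f_i(x), and the primal values never exceed (sum_i f_i)^*(l), which in turn never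
   exceeds the infimal convolution of the f_i^* at l.  So (i) gives primal-dual pairs with gap at
   most m eps, forcing equality; conversely, if both values agree and are finite, near-optimal
   primal and dual points have total gap below eps, hence every single term is below eps. *)

lemma fenchel_young: "ereal (l x) - f x \<le> fconj f l"
  unfolding fconj_def by (rule SUP_upper) auto

lemma fconj_le_iff: "fconj f l \<le> c \<longleftrightarrow> (\<forall>x. ereal (l x) - f x \<le> c)"
  unfolding fconj_def by (simp add: SUP_le_iff)

lemma eps_subdiff_iff_fconj_le:
  assumes "f x = ereal a"
  shows "l \<in> eps_subdiff L f \<epsilon> x \<longleftrightarrow> l \<in> L \<and> fconj f l \<le> ereal (l x - a + \<epsilon>)"
proof -
  have "f y - f x - ereal (l y - l x) + ereal \<epsilon> \<ge> 0 \<longleftrightarrow> ereal (l y) - f y \<le> ereal (l x - a + \<epsilon>)" for y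
    using assms by (cases "f y") auto
  moreover have "x \<in> edom f"
    using assms by (simp add: edom_def)
  ultimately show ?thesis
    by (simp add: eps_subdiff_def fconj_le_iff)
qed

lemma fconj_sum_le_sum_fconj:
  fixes f :: "'i \<Rightarrow> 'a \<Rightarrow> ereal"
  assumes "finite I" and "\<forall>i\<in>I. \<forall>x. f i x \<noteq> -\<infinity>"
  shows "fconj (\<lambda>x. \<Sum>i\<in>I. f i x) (\<lambda>x. \<Sum>i\<in>I. l i x) \<le> (\<Sum>i\<in>I. fconj (f i) (l i))"
  unfolding fconj_le_iff
proof
  fix x
  show "ereal (\<Sum>i\<in>I. l i x) - (\<Sum>i\<in>I. f i x) \<le> (\<Sum>i\<in>I. fconj (f i) (l i))"
  proof (cases "\<exists>i\<in>I. f i x = \<infinity>")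
    case True
    then have "(\<Sum>i\<in>I. f i x) = \<infinity>"
      using \<open>finite I\<close> by (simp add: sum_Pinfty)
    then show ?thesis
      by simp
  next
    case False
    define a where "a i = real_of_ereal (f i x)" for i
    have fx: "f i x = ereal (a i)" if "i \<in> I" for i
      using False assms(2) that unfolding a_def by (cases "f i x") auto
    have "ereal (\<Sum>i\<in>I. l i x) - (\<Sum>i\<in>I. f i x) = ereal (\<Sum>i\<in>I. l i x - a i)"
      by (simp add: fx sum_subtractf)
    also have "\<dots> = (\<Sum>i\<in>I. ereal (l i x) - f i x)"
      by (simp add: fx)
    also have "\<dots> \<le> (\<Sum>i\<in>I. fconj (f i) (l i))"
      by (intro sum_mono fenchel_young)
    finally show ?thesis .
  qed
qed

lemma fconj_sum_le_infconv:
  assumes "\<forall>i\<in>{1..m}. \<forall>x. f i x \<noteq> -\<infinity>"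
  shows "fconj (\<lambda>x. \<Sum>i=1..m. f i x) l \<le> infconv L m (\<lambda>i. fconj (f i)) l"
  unfolding infconv_def
proof (rule INF_greatest, clarify)
  fix ls :: "nat \<Rightarrow> 'a \<Rightarrow> real"
  show "fconj (\<lambda>x. \<Sum>i=1..m. f i x) (\<lambda>x. \<Sum>i=1..m. ls i x) \<le> (\<Sum>i=1..m. fconj (f i) (ls i))"
    using assms by (intro fconj_sum_le_sum_fconj) auto
qed

lemma le_add_of_sum_le_sum_add:
  fixes u v :: "'i \<Rightarrow> real"
  assumes "finite I" and "\<forall>i\<in>I. u i \<le> v i" and "sum v I \<le> sum u I + e" and "j \<in> I"
  shows "v j \<le> u j + e"
proof -
  have "v j - u j \<le> (\<Sum>i\<in>I. v i - u i)"
    using assms by (intro member_le_sum) auto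
  also have "\<dots> \<le> e"
    using assms(3) by (simp add: sum_subtractf)
  finally show ?thesis
    by simp
qed

lemma infconv_le_of_mem_sum_eps_subdiff:
  assumes fin: "\<forall>i\<in>{1..m}. \<forall>y. f i y \<noteq> -\<infinity>"
    and l: "l \<in> minkowski_sum m (\<lambda>i. eps_subdiff L (f i) \<epsilon> x)"
  shows "infconv L m (\<lambda>i. fconj (f i)) l + (\<Sum>i=1..m. f i x) \<le> ereal (l x) + ereal (real m * \<epsilon>)"
proof -
  obtain ls where l_eq: "l = (\<lambda>y. \<Sum>i=1..m. ls i y)"
    and ls: "\<forall>i\<in>{1..m}. ls i \<in> eps_subdiff L (f i) \<epsilon> x"
    using l unfolding minkowski_sum_def by auto
  define a where "a i = real_of_ereal (f i x)" for i
  have fx: "f i x = ereal (a i)" if "i \<in> {1..m}" for i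
    using ls fin that unfolding a_def
    by (cases "f i x") (auto simp: eps_subdiff_def edom_def split: if_splits)
  have ls_fconj: "ls i \<in> L \<and> fconj (f i) (ls i) \<le> ereal (ls i x - a i + \<epsilon>)" if "i \<in> {1..m}" for i
    using ls that eps_subdiff_iff_fconj_le[where f="f i" and x=x, OF fx[OF that]] by blast
  have "infconv L m (\<lambda>i. fconj (f i)) l \<le> (\<Sum>i=1..m. fconj (f i) (ls i))"
    unfolding infconv_def using ls_fconj l_eq by (intro INF_lower) auto
  also have "\<dots> \<le> (\<Sum>i=1..m. ereal (ls i x - a i + \<epsilon>))"
    using ls_fconj by (intro sum_mono) auto
  also have "\<dots> = ereal (l x - (\<Sum>i=1..m. a i) + real m * \<epsilon>)"
    by (simp add: l_eq sum.distrib sum_subtractf)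
  finally show ?thesis
    by (cases "infconv L m (\<lambda>i. fconj (f i)) l") (auto simp: fx)
qed

lemma mem_sum_eps_subdiff_of_gap_le:
  assumes fin: "\<forall>i\<in>{1..m}. \<forall>y. f i y \<noteq> -\<infinity>"
    and ls: "\<forall>i\<in>{1..m}. ls i \<in> L"
    and l_eq: "l = (\<lambda>y. \<Sum>i=1..m. ls i y)"
    and gap: "(\<Sum>i=1..m. fconj (f i) (ls i)) + (\<Sum>i=1..m. f i x) \<le> ereal (l x) + ereal \<epsilon>"
  shows "l \<in> minkowski_sum m (\<lambda>i. eps_subdiff L (f i) \<epsilon> x)"
proof -
  define a where "a i = real_of_ereal (f i x)" for i
  define g where "g i = real_of_ereal (fconj (f i) (ls i))" for i
  have "(\<Sum>i=1..m. f i x) \<noteq> \<infinity>"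
    using gap by auto
  then have fx: "f i x = ereal (a i)" if "i \<in> {1..m}" for i
    using fin that unfolding a_def by (cases "f i x") (auto simp: sum_Pinfty)
  have "(\<Sum>i=1..m. fconj (f i) (ls i)) \<noteq> \<infinity>"
    using gap by (auto simp: fx)
  then have upper: "fconj (f i) (ls i) \<noteq> \<infinity>" if "i \<in> {1..m}" for i
    using that by (simp add: sum_Pinfty)
  have lower: "ereal (ls i x - a i) \<le> fconj (f i) (ls i)" if "i \<in> {1..m}" for i
    using fenchel_young[of "ls i" x "f i"] fx[OF that] by simp
  have g: "fconj (f i) (ls i) = ereal (g i)" if "i \<in> {1..m}" for i
    using upper[OF that] lower[OF that] unfolding g_def by (cases "fconj (f i) (ls i)") auto
  have "g i \<le> ls i x - a i + \<epsilon>" if "i \<in> {1..m}" for i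
  proof (rule le_add_of_sum_le_sum_add[of "{1..m}"])
    show "\<forall>i\<in>{1..m}. ls i x - a i \<le> g i"
      using lower g by simp
    show "sum g {1..m} \<le> (\<Sum>i=1..m. ls i x - a i) + \<epsilon>"
      using gap by (simp add: g fx l_eq sum_subtractf)
  qed (use that in auto)
  then have "ls i \<in> eps_subdiff L (f i) \<epsilon> x" if "i \<in> {1..m}" for i
    using that ls eps_subdiff_iff_fconj_le[where f="f i" and x=x, OF fx[OF that]] g[OF that] by simp
  then show ?thesis
    unfolding minkowski_sum_def l_eq by blast
qed

lemma strong_duality_of_mem_sum_eps_subdiff:
  assumes fin: "\<forall>i\<in>{1..m}. \<forall>y. f i y \<noteq> -\<infinity>" and "m > 0"
    and mem: "\<forall>\<epsilon>>0. \<exists>x. l \<in> minkowski_sum m (\<lambda>i. eps_subdiff L (f i) \<epsilon> x)"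
  shows "fconj (\<lambda>x. \<Sum>i=1..m. f i x) l = infconv L m (\<lambda>i. fconj (f i)) l
    \<and> fconj (\<lambda>x. \<Sum>i=1..m. f i x) l < \<infinity>"
proof -
  let ?F = "fconj (\<lambda>x. \<Sum>i=1..m. f i x) l"
  let ?I = "infconv L m (\<lambda>i. fconj (f i)) l"
  have weak: "?F \<le> ?I"
    using fin by (rule fconj_sum_le_infconv)
  have near: "?I \<le> ?F + ereal (real m * \<epsilon>)" and finite: "?I \<noteq> \<infinity>" if eps: "\<epsilon> > 0" for \<epsilon>
  proof -
    obtain x where "l \<in> minkowski_sum m (\<lambda>i. eps_subdiff L (f i) \<epsilon> x)"
      using mem eps by blast
    with fin have gap: "?I + (\<Sum>i=1..m. f i x) \<le> ereal (l x) + ereal (real m * \<epsilon>)"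
      by (rule infconv_le_of_mem_sum_eps_subdiff)
    then show "?I \<noteq> \<infinity>"
      by auto
    have "ereal (l x) - (\<Sum>i=1..m. f i x) \<le> ?F"
      by (rule fenchel_young)
    with gap show "?I \<le> ?F + ereal (real m * \<epsilon>)"
      by (cases ?I; cases "\<Sum>i=1..m. f i x"; cases ?F) simp_all
  qed
  have "?I \<le> ?F"
  proof (rule ereal_le_epsilon2)
    fix e :: real
    assume "0 < e"
    then show "?I \<le> ?F + ereal e"
      using near[of "e / real m"] \<open>m > 0\<close> by simp
  qed
  with weak finite[of 1] show ?thesis
    by auto
qed

lemma mem_sum_eps_subdiff_of_strong_duality:
  assumes fin: "\<forall>i\<in>{1..m}. \<forall>y. f i y \<noteq> -\<infinity>"
    and x0: "\<forall>i\<in>{1..m}. x0 \<in> edom (f i)"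
    and eq: "fconj (\<lambda>x. \<Sum>i=1..m. f i x) l = infconv L m (\<lambda>i. fconj (f i)) l"
    and less: "fconj (\<lambda>x. \<Sum>i=1..m. f i x) l < \<infinity>"
    and "\<epsilon> > 0"
  shows "\<exists>x. l \<in> minkowski_sum m (\<lambda>i. eps_subdiff L (f i) \<epsilon> x)"
proof -
  let ?F = "fconj (\<lambda>x. \<Sum>i=1..m. f i x) l"
  have "(\<Sum>i=1..m. f i x0) = (\<Sum>i=1..m. ereal (real_of_ereal (f i x0)))"
    using fin x0 by (intro sum.cong) (auto simp: edom_def ereal_real)
  then have "(\<Sum>i=1..m. f i x0) = ereal (\<Sum>i=1..m. real_of_ereal (f i x0))"
    by simp
  then have "?F \<noteq> -\<infinity>"
    using fenchel_young[of l x0 "\<lambda>x. \<Sum>i=1..m. f i x"] by auto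
  with less obtain c where c: "?F = ereal c"
    by (cases ?F) auto
  have "infconv L m (\<lambda>i. fconj (f i)) l < ereal (c + \<epsilon> / 2)"
    using eq c \<open>\<epsilon> > 0\<close> by simp
  then obtain ls where ls: "\<forall>i\<in>{1..m}. ls i \<in> L" and l_eq: "(\<lambda>y. \<Sum>i=1..m. ls i y) = l"
    and dual: "(\<Sum>i=1..m. fconj (f i) (ls i)) < ereal (c + \<epsilon> / 2)"
    unfolding infconv_def by (auto simp: INF_less_iff)
  have "ereal (c - \<epsilon> / 2) < ?F"
    using c \<open>\<epsilon> > 0\<close> by simp
  then obtain x where primal: "ereal (c - \<epsilon> / 2) < ereal (l x) - (\<Sum>i=1..m. f i x)"
    unfolding fconj_def by (auto simp: less_SUP_iff)
  have "(\<Sum>i=1..m. fconj (f i) (ls i)) + (\<Sum>i=1..m. f i x) \<le> ereal (l x) + ereal \<epsilon>"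
    using dual primal
    by (cases "\<Sum>i=1..m. fconj (f i) (ls i)"; cases "\<Sum>i=1..m. f i x") simp_all
  with fin ls l_eq[symmetric] show ?thesis
    by (blast intro: mem_sum_eps_subdiff_of_gap_le)
qed

lemma mem_Inter_sum_eps_subdiff_iff_strong_duality:
  assumes fin: "\<forall>i\<in>{1..m}. \<forall>y. f i y \<noteq> -\<infinity>" and "m > 0"
    and x0: "\<forall>i\<in>{1..m}. x0 \<in> edom (f i)"
  shows "l \<in> (\<Inter>\<epsilon>\<in>{\<epsilon>::real. \<epsilon> > 0}. \<Union>x. minkowski_sum m (\<lambda>i. eps_subdiff L (f i) \<epsilon> x))
    \<longleftrightarrow> fconj (\<lambda>x. \<Sum>i=1..m. f i x) l = infconv L m (\<lambda>i. fconj (f i)) l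
      \<and> fconj (\<lambda>x. \<Sum>i=1..m. f i x) l < \<infinity>"
proof -
  have "l \<in> (\<Inter>\<epsilon>\<in>{\<epsilon>::real. \<epsilon> > 0}. \<Union>x. minkowski_sum m (\<lambda>i. eps_subdiff L (f i) \<epsilon> x))
    \<longleftrightarrow> (\<forall>\<epsilon>>0. \<exists>x. l \<in> minkowski_sum m (\<lambda>i. eps_subdiff L (f i) \<epsilon> x))"
    by blast
  also have "\<dots> \<longleftrightarrow> fconj (\<lambda>x. \<Sum>i=1..m. f i x) l = infconv L m (\<lambda>i. fconj (f i)) l
      \<and> fconj (\<lambda>x. \<Sum>i=1..m. f i x) l < \<infinity>"
    using strong_duality_of_mem_sum_eps_subdiff[OF fin \<open>m > 0\<close>]
      mem_sum_eps_subdiff_of_strong_duality[OF fin x0]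
    by blast
  finally show ?thesis .
qed

theorem mainTheorem5:
  fixes L :: "('a \<Rightarrow> real) set" and f :: "nat \<Rightarrow> 'a \<Rightarrow> ereal" and m :: nat
  assumes "abstract_linear_space L"
    and "m \<ge> 2"
    and "\<forall>i\<in>{1..m}. \<forall>x. f i x \<noteq> -\<infinity>"
    and "(\<Inter>i\<in>{1..m}. edom (f i)) \<noteq> {}"
    and "(\<lambda>x::'a. 0::real) \<in> L"
  shows "((\<lambda>x::'a. 0::real) \<in> (\<Inter>\<epsilon>\<in>{\<epsilon>::real. \<epsilon> > 0}. \<Union>x. minkowski_sum m (\<lambda>i. eps_subdiff L (f i) \<epsilon> x)))
     \<longleftrightarrow> (fconj (\<lambda>x. \<Sum>i=1..m. f i x) (\<lambda>x. 0) = infconv L m (\<lambda>i. fconj (f i)) (\<lambda>x. 0)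
          \<and> fconj (\<lambda>x. \<Sum>i=1..m. f i x) (\<lambda>x. 0) < \<infinity>)"
proof -
  obtain x0 where "\<forall>i\<in>{1..m}. x0 \<in> edom (f i)"
    using assms(4) by blast
  moreover have "m > 0"
    using assms(2) by simp
  ultimately show ?thesis
    using assms(3) by (intro mem_Inter_sum_eps_subdiff_iff_strong_duality)
qed

end
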